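(* Let $\nu$ be a Lévy measure on $\mathbb R$, let $\beta>0$, let $f\in l^\infty(\mathrm{supp}(\nu))\cap l^1(\mathrm{supp}(\nu))$ and let $k$ be a function on $\mathrm{supp}(\nu)$ which is bounded from above. Then the equation $$\varphi(x)=\exp\Big\{k(x)-\beta f(x)\int f(z)\varphi(z)\,\nu(dz)\Big\},\qquad x\in\mathrm{supp}(\nu),$$ defines a function $\varphi:\mathrm{supp}(\nu)\to\mathbb R$ in a well-defined (unique) way, and this $\varphi$ is bounded.
   Context: $l^\infty(\mathrm{supp}(\nu))\cap l^1(\mathrm{supp}(\nu))$ denotes the set of bounded, $\nu$-integrable real functions on the support of $\nu$. *)

theory Defs
  imports "HOL-Analysis.Analysis"
begin

definition msupp :: "real measure \<Rightarrow> real set" where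
  "msupp \<nu> = {x. \<forall>e>0. emeasure \<nu> (ball x e) > 0}"

definition levy_measure :: "real measure \<Rightarrow> bool" where
  "levy_measure \<nu> \<longleftrightarrow> sets \<nu> = sets borel \<and> emeasure \<nu> {0} = 0 \<and>
     (\<integral>\<^sup>+ x. ennreal (min 1 (x\<^sup>2)) \<partial>\<nu>) < \<infinity>"

end

theory Submission
  imports Defs
begin

text \<open>A solution is necessarily of the form \<open>\<phi>\<^sub>c x = exp (k x - \<beta> f x c)\<close> with
  \<open>c = \<integral> f \<phi>\<^sub>c d\<nu>\<close>, so solutions correspond to the fixed points of the scalar map
  \<open>G c = \<integral> f(z) exp (k z - \<beta> f z c) \<nu>(dz)\<close>. Since \<open>\<beta> \<ge> 0\<close>, each integrand is
  antitone in \<open>c\<close>, so \<open>G\<close> is antitone; by dominated convergence (with dominator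
  \<open>|f| exp (sup k + \<beta> sup |f| R)\<close> for \<open>|c| \<le> R\<close>) it is continuous. Hence
  \<open>c - G c\<close> is continuous and strictly increasing and has exactly one zero. The resulting
  \<open>\<phi>\<^sub>c\<close> is bounded by \<open>exp (sup k + \<beta> sup |f| |c|)\<close>.\<close>

lemma antimono_continuous_unique_fixed_point:
  fixes G :: "real \<Rightarrow> real"
  assumes "antimono G" and "continuous_on UNIV G"
  shows "\<exists>!c. G c = c"
proof -
  define a where "a = - \<bar>G 0\<bar> - 1"
  define b where "b = \<bar>G 0\<bar> + 1"
  have "G 0 \<le> G a"
    by (rule antimonoD[OF assms(1)]) (simp add: a_def)
  then have "a - G a \<le> 0"
    unfolding a_def by linarith
  moreover have "G b \<le> G 0"
    by (rule antimonoD[OF assms(1)]) (simp add: b_def)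
  then have "0 \<le> b - G b"
    unfolding b_def by linarith
  moreover have "a \<le> b"
    by (simp add: a_def b_def)
  moreover have "isCont (\<lambda>c. c - G c) x" for x
    using assms(2) by (auto intro: continuous_intros simp: continuous_on_eq_continuous_at)
  ultimately obtain c where "c - G c = 0"
    using IVT[of "\<lambda>c. c - G c" a 0 b] by blast
  moreover have "x = y" if "G x = x" and "G y = y" for x y
    using antimonoD[OF assms(1), of x y] antimonoD[OF assms(1), of y x] that by linarith
  ultimately show ?thesis
    by (metis eq_iff_diff_eq_0)
qed

lemma antimono_times_exp_minus_times:
  fixes a b \<beta> :: real
  assumes "0 \<le> \<beta>"
  shows "antimono (\<lambda>c. a * exp (b - \<beta> * a * c))"
proof (rule antimonoI)
  fix c c' :: real
  assume "c \<le> c'"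
  show "a * exp (b - \<beta> * a * c') \<le> a * exp (b - \<beta> * a * c)"
  proof (cases "0 \<le> a")
    case True
    then have "\<beta> * a * c \<le> \<beta> * a * c'"
      using \<open>c \<le> c'\<close> assms by (simp add: mult_left_mono)
    then show ?thesis
      using True by (simp add: mult_left_mono)
  next
    case False
    then have "\<beta> * a \<le> 0"
      using assms by (simp add: mult_nonneg_nonpos)
    with \<open>c \<le> c'\<close> have "\<beta> * a * c' \<le> \<beta> * a * c"
      by (rule mult_left_mono_neg)
    then show ?thesis
      using False by (simp add: mult_left_mono_neg)
  qed
qed

definition self_consistency_map ::
    "'a measure \<Rightarrow> 'a set \<Rightarrow> ('a \<Rightarrow> real) \<Rightarrow> ('a \<Rightarrow> real) \<Rightarrow> real \<Rightarrow> real \<Rightarrow> real" where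
  "self_consistency_map M S f k \<beta> c = (\<integral>z\<in>S. f z * exp (k z - \<beta> * f z * c) \<partial>M)"

lemma self_consistency_map_fixed_point_of_solution:
  assumes "\<forall>x\<in>S. \<psi> x = exp (k x - \<beta> * f x * (\<integral>z\<in>S. f z * \<psi> z \<partial>M))"
  shows "self_consistency_map M S f k \<beta> (\<integral>z\<in>S. f z * \<psi> z \<partial>M) = (\<integral>z\<in>S. f z * \<psi> z \<partial>M)"
proof -
  have "(\<lambda>z. indicator S z *\<^sub>R (f z * exp (k z - \<beta> * f z * (\<integral>z\<in>S. f z * \<psi> z \<partial>M)))) =
        (\<lambda>z. indicator S z *\<^sub>R (f z * \<psi> z))"
    using assms by (auto simp: indicator_def)
  then show ?thesis
    by (simp add: self_consistency_map_def set_lebesgue_integral_def)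
qed

context
  fixes M :: "'a measure" and S :: "'a set" and f k :: "'a \<Rightarrow> real" and \<beta> :: real
  assumes f_bounded: "bounded (f ` S)"
    and f_integrable: "set_integrable M S f"
    and k_measurable: "set_borel_measurable M S k"
    and k_bdd_above: "bdd_above (k ` S)"
    and \<beta>_nonneg: "0 \<le> \<beta>"
begin

lemma exp_self_consistency_uniformly_bounded:
  fixes R :: real
  obtains C where "\<And>z c. z \<in> S \<Longrightarrow> \<bar>c\<bar> \<le> R \<Longrightarrow> exp (k z - \<beta> * f z * c) \<le> C"
proof -
  obtain B where B: "\<And>z. z \<in> S \<Longrightarrow> \<bar>f z\<bar> \<le> B"
    using f_bounded by (auto simp: bounded_real)
  obtain K where K: "\<And>z. z \<in> S \<Longrightarrow> k z \<le> K"
    using k_bdd_above by (auto simp: bdd_above_def)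
  have "exp (k z - \<beta> * f z * c) \<le> exp (K + \<beta> * B * R)" if "z \<in> S" and "\<bar>c\<bar> \<le> R" for z c
  proof -
    have "\<bar>\<beta> * f z * c\<bar> \<le> \<beta> * B * R"
      using B[OF \<open>z \<in> S\<close>] \<open>\<bar>c\<bar> \<le> R\<close> \<beta>_nonneg by (simp add: abs_mult mult_mono)
    then show ?thesis
      using K[OF \<open>z \<in> S\<close>] by simp
  qed
  then show thesis
    using that by blast
qed

lemma bounded_exp_self_consistency: "bounded ((\<lambda>z. exp (k z - \<beta> * f z * c)) ` S)"
proof -
  obtain C where C: "\<And>z c'. z \<in> S \<Longrightarrow> \<bar>c'\<bar> \<le> \<bar>c\<bar> \<Longrightarrow> exp (k z - \<beta> * f z * c') \<le> C"
    using exp_self_consistency_uniformly_bounded[where R = "\<bar>c\<bar>"] by metis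
  show ?thesis
    unfolding bounded_real using C[OF _ order_refl] by (intro exI[of _ C]) auto
qed

lemma set_borel_measurable_self_consistency_integrand:
  "set_borel_measurable M S (\<lambda>z. f z * exp (k z - \<beta> * f z * c))"
proof -
  have [measurable]: "(\<lambda>z. indicator S z * f z) \<in> borel_measurable M"
    using f_integrable by (simp add: set_integrable_def)
  have [measurable]: "(\<lambda>z. indicator S z * k z) \<in> borel_measurable M"
    using k_measurable by (simp add: set_borel_measurable_def)
  \<comment> \<open>Pushing the indicator into \<open>f\<close> and \<open>k\<close> is harmless: outside \<open>S\<close> both sides vanish.\<close>
  have "(\<lambda>z. indicator S z *\<^sub>R (f z * exp (k z - \<beta> * f z * c))) =
        (\<lambda>z. indicator S z * f z * exp (indicator S z * k z - \<beta> * (indicator S z * f z) * c))"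
    by (auto simp: indicator_def)
  moreover have "\<dots> \<in> borel_measurable M"
    by measurable
  ultimately show ?thesis
    by (simp add: set_borel_measurable_def)
qed

lemma set_integrable_self_consistency_integrand:
  "set_integrable M S (\<lambda>z. f z * exp (k z - \<beta> * f z * c))"
proof -
  obtain C where C: "\<And>z c'. z \<in> S \<Longrightarrow> \<bar>c'\<bar> \<le> \<bar>c\<bar> \<Longrightarrow> exp (k z - \<beta> * f z * c') \<le> C"
    using exp_self_consistency_uniformly_bounded[where R = "\<bar>c\<bar>"] by metis
  show ?thesis
  proof (rule set_integrable_bound)
    show "set_integrable M S (\<lambda>z. C * f z)"
      using f_integrable by (rule set_integrable_mult_right)
    show "AE z in M. z \<in> S \<longrightarrow> norm (f z * exp (k z - \<beta> * f z * c)) \<le> norm (C * f z)"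
    proof (intro AE_I2 impI)
      fix z
      assume "z \<in> S"
      have "\<bar>f z\<bar> * exp (k z - \<beta> * f z * c) \<le> \<bar>f z\<bar> * \<bar>C\<bar>"
        using C[OF \<open>z \<in> S\<close> order_refl] by (intro mult_left_mono) auto
      then show "norm (f z * exp (k z - \<beta> * f z * c)) \<le> norm (C * f z)"
        by (simp add: abs_mult mult.commute)
    qed
  qed (rule set_borel_measurable_self_consistency_integrand)
qed

lemma antimono_self_consistency_map: "antimono (self_consistency_map M S f k \<beta>)"
proof (rule antimonoI)
  fix c c' :: real
  assume "c \<le> c'"
  then show "self_consistency_map M S f k \<beta> c' \<le> self_consistency_map M S f k \<beta> c"
    unfolding self_consistency_map_def
    using antimono_times_exp_minus_times[OF \<beta>_nonneg]
    by (intro set_integral_mono set_integrable_self_consistency_integrand) (auto simp: antimono_def)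
qed

lemma isCont_self_consistency_map: "isCont (self_consistency_map M S f k \<beta>) a"
  unfolding continuous_at_sequentially comp_def
proof (intro allI impI)
  fix X :: "nat \<Rightarrow> real"
  assume X: "X \<longlonglongrightarrow> a"
  then obtain R where R: "\<And>n. \<bar>X n\<bar> \<le> R"
    using convergent_imp_Bseq[of X] unfolding Bseq_def convergent_def by auto
  obtain C where C: "\<And>z c. z \<in> S \<Longrightarrow> \<bar>c\<bar> \<le> R \<Longrightarrow> exp (k z - \<beta> * f z * c) \<le> C"
    using exp_self_consistency_uniformly_bounded by metis
  show "(\<lambda>n. self_consistency_map M S f k \<beta> (X n)) \<longlonglongrightarrow> self_consistency_map M S f k \<beta> a"
    unfolding self_consistency_map_def set_lebesgue_integral_def
  proof (rule integral_dominated_convergence[where w="\<lambda>z. \<bar>indicator S z * f z\<bar> * C"])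
    show "integrable M (\<lambda>z. \<bar>indicator S z * f z\<bar> * C)"
      using f_integrable by (simp add: set_integrable_def)
    show "AE z in M. (\<lambda>n. indicator S z *\<^sub>R (f z * exp (k z - \<beta> * f z * X n))) \<longlonglongrightarrow>
                     indicator S z *\<^sub>R (f z * exp (k z - \<beta> * f z * a))"
      by (intro AE_I2 tendsto_intros X)
    show "AE z in M. norm (indicator S z *\<^sub>R (f z * exp (k z - \<beta> * f z * X n))) \<le>
                     \<bar>indicator S z * f z\<bar> * C" for n
      using C[OF _ R] by (auto simp: abs_mult indicator_def intro!: AE_I2 mult_left_mono)
  qed (use set_borel_measurable_self_consistency_integrand in \<open>auto simp: set_borel_measurable_def\<close>)
qed

lemma self_consistency_map_unique_fixed_point: "\<exists>!c. self_consistency_map M S f k \<beta> c = c"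
  using antimono_self_consistency_map isCont_self_consistency_map
  by (intro antimono_continuous_unique_fixed_point) (auto intro: continuous_at_imp_continuous_on)

end

theorem lemma3p3:
  fixes \<nu> :: "real measure" and \<beta> :: real and f k :: "real \<Rightarrow> real"
  assumes "levy_measure \<nu>"
    and "\<beta> > 0"
    and "bounded (f ` msupp \<nu>)"
    and "set_integrable \<nu> (msupp \<nu>) f"
    and "set_borel_measurable \<nu> (msupp \<nu>) k"
    and "bdd_above (k ` msupp \<nu>)"
  shows "\<exists>\<phi>. set_integrable \<nu> (msupp \<nu>) (\<lambda>z. f z * \<phi> z)
            \<and> (\<forall>x\<in>msupp \<nu>. \<phi> x = exp (k x - \<beta> * f x * (\<integral>z\<in>msupp \<nu>. f z * \<phi> z \<partial>\<nu>)))
            \<and> bounded (\<phi> ` msupp \<nu>)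
            \<and> (\<forall>\<psi>. set_integrable \<nu> (msupp \<nu>) (\<lambda>z. f z * \<psi> z)
                   \<and> (\<forall>x\<in>msupp \<nu>. \<psi> x = exp (k x - \<beta> * f x * (\<integral>z\<in>msupp \<nu>. f z * \<psi> z \<partial>\<nu>)))
                   \<longrightarrow> (\<forall>x\<in>msupp \<nu>. \<psi> x = \<phi> x))"
proof -
  let ?S = "msupp \<nu>"
  note hyps = assms(3-6) less_imp_le[OF assms(2)]
  obtain c where c: "self_consistency_map \<nu> ?S f k \<beta> c = c"
    and unique: "\<And>c'. self_consistency_map \<nu> ?S f k \<beta> c' = c' \<Longrightarrow> c' = c"
    using self_consistency_map_unique_fixed_point[OF hyps] by blast
  define \<phi> where "\<phi> x = exp (k x - \<beta> * f x * c)" for x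
  have integral_\<phi>: "(\<integral>z\<in>?S. f z * \<phi> z \<partial>\<nu>) = c"
    using c by (simp add: self_consistency_map_def \<phi>_def)
  show ?thesis
  proof (intro exI[of _ \<phi>] conjI allI impI ballI)
    show "set_integrable \<nu> ?S (\<lambda>z. f z * \<phi> z)"
      unfolding \<phi>_def by (rule set_integrable_self_consistency_integrand[OF hyps])
    show "bounded (\<phi> ` ?S)"
      unfolding \<phi>_def by (rule bounded_exp_self_consistency[OF hyps])
    show "\<phi> x = exp (k x - \<beta> * f x * (\<integral>z\<in>?S. f z * \<phi> z \<partial>\<nu>))" for x
      unfolding integral_\<phi> by (simp add: \<phi>_def)
  next
    fix \<psi> x
    assume \<psi>: "set_integrable \<nu> ?S (\<lambda>z. f z * \<psi> z) \<and>
      (\<forall>x\<in>?S. \<psi> x = exp (k x - \<beta> * f x * (\<integral>z\<in>?S. f z * \<psi> z \<partial>\<nu>)))" and "x \<in> ?S"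
    then have "(\<integral>z\<in>?S. f z * \<psi> z \<partial>\<nu>) = c"
      using unique self_consistency_map_fixed_point_of_solution by blast
    then show "\<psi> x = \<phi> x"
      using \<psi> \<open>x \<in> ?S\<close> by (simp add: \<phi>_def)
  qed
qed

end
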